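(* Let $X$ be a finite set, $f:2^X\to\mathbb{R}_{\ge0}$ a normalized monotone submodular function possessing supermodularity of conditioning, $n\le|X|$ a positive integer and $S^*\in\arg\max_{S\subseteq X,\,|S|\le n}f(S)$. Let $x_1,\dots,x_n\in X$ be arbitrary distinct elements, $S_0=\emptyset$, $S_i=\{x_1,\dots,x_i\}$. For each $i$ let $M_i:=\max_{x\in X\setminus S_{i-1}}\bar f(x\mid S_{i-1})$ and define $\beta_i:=\underline f(x_i\mid S_{i-1})/M_i$ if $\underline f(x_i\mid S_{i-1})>0$, and $\beta_i:=0$ otherwise. Then \[ f(S_n)\ \ge\ \left(1-e^{-\frac1n\sum_{i=1}^n\beta_i}\right)f(S^* ). \] (Here $\beta_i$ plays the role of $1/\alpha_i$ with $\alpha_i=M_i/\underline f(x_i\mid S_{i-1})$, and $\alpha_i=\infty$ when the lower estimate is not positive.)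
   Context: $f(x\mid A):=f(A\cup\{x\})-f(A)$, $f(x):=f(\{x\})$, $f(x\mid y):=f(x\mid\{y\})$. Pairwise upper estimate: $\bar f(x\mid S):=\min_{A\subseteq S,|A|\le1}f(x\mid A)$ (so $\bar f(x\mid\emptyset)=f(x)$). Pairwise lower estimate: $\underline f(x\mid S):=f(x)-\sum_{y\in S}(f(x)-f(x\mid y))$. Supermodularity of conditioning: for all $S\subseteq X$, $A\subseteq B\subseteq X$, $C\subseteq X\setminus B$, $f(S\mid A)-f(S\mid A\cup C)\ge f(S\mid B)-f(S\mid B\cup C)$, where $f(T\mid A):=f(A\cup T)-f(A)$. *)

theory Defs
  imports Complex_Main
begin

definition cond_gain :: "('a set \<Rightarrow> real) \<Rightarrow> 'a set \<Rightarrow> 'a set \<Rightarrow> real" where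
  "cond_gain f T A = f (A \<union> T) - f A"

definition marg :: "('a set \<Rightarrow> real) \<Rightarrow> 'a \<Rightarrow> 'a set \<Rightarrow> real" where
  "marg f x A = f (A \<union> {x}) - f A"

definition upper_est :: "('a set \<Rightarrow> real) \<Rightarrow> 'a \<Rightarrow> 'a set \<Rightarrow> real" where
  "upper_est f x S = Min ((\<lambda>A. marg f x A) ` {A. A \<subseteq> S \<and> finite A \<and> card A \<le> 1})"

definition lower_est :: "('a set \<Rightarrow> real) \<Rightarrow> 'a \<Rightarrow> 'a set \<Rightarrow> real" where
  "lower_est f x S = f {x} - (\<Sum>y\<in>S. f {x} - marg f x {y})"

definition normalized :: "('a set \<Rightarrow> real) \<Rightarrow> bool" where
  "normalized f \<longleftrightarrow> f {} = 0"

definition nonneg_on :: "'a set \<Rightarrow> ('a set \<Rightarrow> real) \<Rightarrow> bool" where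
  "nonneg_on X f \<longleftrightarrow> (\<forall>A. A \<subseteq> X \<longrightarrow> 0 \<le> f A)"

definition monotone_set_fun :: "'a set \<Rightarrow> ('a set \<Rightarrow> real) \<Rightarrow> bool" where
  "monotone_set_fun X f \<longleftrightarrow> (\<forall>A B. A \<subseteq> B \<and> B \<subseteq> X \<longrightarrow> f A \<le> f B)"

definition submodular :: "'a set \<Rightarrow> ('a set \<Rightarrow> real) \<Rightarrow> bool" where
  "submodular X f \<longleftrightarrow> (\<forall>A B. A \<subseteq> X \<and> B \<subseteq> X \<longrightarrow> f (A \<union> B) + f (A \<inter> B) \<le> f A + f B)"

definition supermod_conditioning :: "'a set \<Rightarrow> ('a set \<Rightarrow> real) \<Rightarrow> bool" where
  "supermod_conditioning X f \<longleftrightarrow>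
     (\<forall>S A B C. S \<subseteq> X \<and> A \<subseteq> B \<and> B \<subseteq> X \<and> C \<subseteq> X - B \<longrightarrow>
        cond_gain f S A - cond_gain f S (A \<union> C) \<ge> cond_gain f S B - cond_gain f S (B \<union> C))"

end

theory Submission
  imports Defs
begin

text \<open>The gap f(S*) - f(S_i) contracts at every step.  By submodularity,
  f(S*) - f(S_{i-1}) is at most the sum of the marginal gains of the at most n elements of
  S* over S_{i-1}, each of which is bounded by its upper estimate and hence by M_i.  Supermodularity
  of conditioning makes the lower estimate a true lower bound on the gain of x_i, so
  f(S_i) - f(S_{i-1}) \<ge> (\<beta>_i / n) (f(S*) - f(S_{i-1})).  Since 1 - t \<le> e^{-t}, the gap is
  multiplied by at most e^{-\<beta>_i/n} per step, and telescoping from f(S_0) = 0 gives the bound.\<close>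

lemma monotone_set_funD:
  "monotone_set_fun X f \<Longrightarrow> A \<subseteq> B \<Longrightarrow> B \<subseteq> X \<Longrightarrow> f A \<le> f B"
  unfolding monotone_set_fun_def by blast

lemma submodularD:
  "submodular X f \<Longrightarrow> A \<subseteq> X \<Longrightarrow> B \<subseteq> X \<Longrightarrow> f (A \<union> B) + f (A \<inter> B) \<le> f A + f B"
  unfolding submodular_def by blast

lemma supermod_conditioningD:
  "supermod_conditioning X f \<Longrightarrow> S \<subseteq> X \<Longrightarrow> A \<subseteq> B \<Longrightarrow> B \<subseteq> X \<Longrightarrow> C \<subseteq> X - B \<Longrightarrow>
    cond_gain f S A - cond_gain f S (A \<union> C) \<ge> cond_gain f S B - cond_gain f S (B \<union> C)"
  unfolding supermod_conditioning_def by blast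

lemma marg_nonneg:
  assumes "monotone_set_fun X f" "A \<subseteq> X" "y \<in> X"
  shows "0 \<le> marg f y A"
  using monotone_set_funD[OF assms(1), of A "insert y A"] assms(2,3)
  unfolding marg_def by (simp add: subset_insertI)

lemma marg_antimono:
  assumes mono: "monotone_set_fun X f" and sub: "submodular X f"
    and AB: "A \<subseteq> B" and BX: "B \<subseteq> X" and yX: "y \<in> X"
  shows "marg f y B \<le> marg f y A"
proof (cases "y \<in> B")
  case True
  then have "marg f y B = 0" unfolding marg_def by (simp add: insert_absorb)
  then show ?thesis using marg_nonneg[OF mono order.trans[OF AB BX] yX] by simp
next
  case False
  have "f ((A \<union> {y}) \<union> B) + f ((A \<union> {y}) \<inter> B) \<le> f (A \<union> {y}) + f B"
    by (rule submodularD[OF sub _ BX]) (use AB BX yX in auto)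
  moreover have "(A \<union> {y}) \<union> B = B \<union> {y}" "(A \<union> {y}) \<inter> B = A" using AB False by auto
  ultimately show ?thesis unfolding marg_def by simp
qed

lemma submodular_le_sum_marg:
  assumes mono: "monotone_set_fun X f" and sub: "submodular X f"
    and "finite T" "T \<subseteq> X" "S \<subseteq> X"
  shows "f (S \<union> T) \<le> f S + (\<Sum>y\<in>T. marg f y S)"
  using assms(3,4)
proof (induction T rule: finite_induct)
  case empty
  then show ?case by simp
next
  case (insert y T)
  have "marg f y (S \<union> T) \<le> marg f y S"
    by (rule marg_antimono[OF mono sub]) (use insert assms in auto)
  moreover have "f (S \<union> insert y T) = f (S \<union> T) + marg f y (S \<union> T)"
    unfolding marg_def by (simp add: Un_insert_right)
  ultimately show ?case using insert by simp
qed

lemma lower_est_le_marg: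
  assumes sc: "supermod_conditioning X f" and nz: "normalized f"
    and "finite S" "S \<subseteq> X" "z \<in> X"
  shows "lower_est f z S \<le> marg f z S"
  using assms(3,4)
proof (induction S rule: finite_induct)
  case empty
  then show ?case using nz unfolding lower_est_def marg_def normalized_def by simp
next
  case (insert y T)
  have "cond_gain f {z} {} - cond_gain f {z} ({} \<union> {y})
      \<ge> cond_gain f {z} T - cond_gain f {z} (T \<union> {y})"
    by (rule supermod_conditioningD[OF sc]) (use insert assms(5) in auto)
  then have "f {z} - marg f z {y} \<ge> marg f z T - marg f z (insert y T)"
    using nz unfolding cond_gain_def marg_def normalized_def by simp
  moreover have "lower_est f z (insert y T) = lower_est f z T - (f {z} - marg f z {y})"
    unfolding lower_est_def using insert by simp
  ultimately show ?case using insert by simp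
qed

lemma marg_le_upper_est:
  assumes mono: "monotone_set_fun X f" and sub: "submodular X f"
    and "finite S" "S \<subseteq> X" "y \<in> X"
  shows "marg f y S \<le> upper_est f y S"
proof -
  let ?F = "{A. A \<subseteq> S \<and> finite A \<and> card A \<le> 1}"
  have fin: "finite ?F" by (rule finite_subset[of _ "Pow S"]) (use assms(3) in auto)
  have ne: "{} \<in> ?F" by simp
  show ?thesis unfolding upper_est_def
  proof (rule Min.boundedI)
    show "finite (marg f y ` ?F)" using fin by simp
    show "marg f y ` ?F \<noteq> {}" using ne by blast
    show "marg f y S \<le> a" if "a \<in> marg f y ` ?F" for a
      using that marg_antimono[OF mono sub _ assms(4,5)] by auto
  qed
qed

lemma gap_le_card_mul:
  assumes finX: "finite X" and mono: "monotone_set_fun X f" and sub: "submodular X f"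
    and PX: "P \<subseteq> X" and TX: "T \<subseteq> X"
    and M: "\<And>y. y \<in> X - P \<Longrightarrow> upper_est f y P \<le> M"
  shows "f T - f P \<le> real (card (T - P)) * M"
proof -
  have finP: "finite P" and finT: "finite (T - P)"
    using finite_subset[OF PX finX] finite_subset[OF _ finX] TX by auto
  have "f T \<le> f (P \<union> (T - P))"
    by (rule monotone_set_funD[OF mono]) (use PX TX in auto)
  also have "\<dots> \<le> f P + (\<Sum>y\<in>T - P. marg f y P)"
    by (rule submodular_le_sum_marg[OF mono sub finT]) (use TX PX in auto)
  also have "(\<Sum>y\<in>T - P. marg f y P) \<le> real (card (T - P)) * M"
  proof (rule sum_bounded_above)
    fix y assume "y \<in> T - P"
    then show "marg f y P \<le> M"
      using marg_le_upper_est[OF mono sub finP PX, of y] M[of y] TX by auto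
  qed
  finally show ?thesis by simp
qed

definition greedy_ratio :: "'a set \<Rightarrow> ('a set \<Rightarrow> real) \<Rightarrow> 'a set \<Rightarrow> 'a \<Rightarrow> real" where
  "greedy_ratio X f P y =
     (if lower_est f y P > 0
      then lower_est f y P / Max ((\<lambda>z. upper_est f z P) ` (X - P)) else 0)"

lemma gap_insert_le_exp:
  assumes finX: "finite X" and nz: "normalized f" and mono: "monotone_set_fun X f"
    and sub: "submodular X f" and sc: "supermod_conditioning X f"
    and PX: "P \<subseteq> X" and y: "y \<in> X - P" and TX: "T \<subseteq> X" and cardT: "card T \<le> n"
    and npos: "0 < n" and gap: "f P \<le> f T"
  shows "f T - f (insert y P) \<le> exp (- (greedy_ratio X f P y / n)) * (f T - f P)"
proof (cases "lower_est f y P > 0")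
  case False
  then show ?thesis
    using marg_nonneg[OF mono PX] y unfolding greedy_ratio_def marg_def by simp
next
  case True
  define L where "L = lower_est f y P"
  define M where "M = Max ((\<lambda>z. upper_est f z P) ` (X - P))"
  define \<beta> where "\<beta> = greedy_ratio X f P y"
  have finP: "finite P" using finite_subset[OF PX finX] .
  have upper_le_M: "upper_est f z P \<le> M" if "z \<in> X - P" for z
    unfolding M_def using finX that by (intro Max_ge) auto
  have L_le: "L \<le> marg f y P" unfolding L_def using lower_est_le_marg[OF sc nz finP PX] y by simp
  have "marg f y P \<le> M" using marg_le_upper_est[OF mono sub finP PX] upper_le_M y by force
  then have Mpos: "0 < M" using True L_le L_def by simp
  have \<beta>: "\<beta> = L / M" using True unfolding \<beta>_def greedy_ratio_def L_def M_def by simp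
  have "card (T - P) \<le> n" using cardT finite_subset[OF TX finX] card_mono[of T "T - P"] by auto
  then have "real (card (T - P)) * M \<le> n * M" using Mpos by (intro mult_right_mono) auto
  with gap_le_card_mul[OF finX mono sub PX TX upper_le_M] have "f T - f P \<le> n * M" by simp
  then have "\<beta> / n * (f T - f P) \<le> \<beta> / n * (n * M)"
    using \<beta> True Mpos L_def by (intro mult_left_mono) auto
  also have "\<dots> = L" using \<beta> Mpos npos by simp
  finally have "\<beta> / n * (f T - f P) \<le> L" .
  then have "f T - f (insert y P) \<le> (1 - \<beta> / n) * (f T - f P)"
    using L_le unfolding marg_def by (simp add: algebra_simps)
  also have "\<dots> \<le> exp (- (\<beta> / n)) * (f T - f P)"
    using gap exp_ge_add_one_self[of "- (\<beta> / n)"] by (intro mult_right_mono) auto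
  finally show ?thesis unfolding \<beta>_def .
qed

lemma decay_exp_sum:
  fixes d a :: "nat \<Rightarrow> real"
  assumes "\<And>i. i \<in> {1..m} \<Longrightarrow> d i \<le> exp (- a i) * d (i - 1)" and "d 0 \<le> D"
  shows "d m \<le> exp (- (\<Sum>i=1..m. a i)) * D"
  using assms(1)
proof (induction m)
  case 0
  then show ?case using assms(2) by simp
next
  case (Suc m)
  have "d (Suc m) \<le> exp (- a (Suc m)) * d m" using Suc.prems[of "Suc m"] by simp
  also have "\<dots> \<le> exp (- a (Suc m)) * (exp (- (\<Sum>i=1..m. a i)) * D)"
    using Suc by (intro mult_left_mono) auto
  also have "\<dots> = exp (- (\<Sum>i=1..Suc m. a i)) * D"
    by (simp add: exp_add[symmetric] algebra_simps)
  finally show ?case .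
qed

lemma image_prefix_insert:
  fixes x :: "nat \<Rightarrow> 'a"
  assumes inj: "inj_on x {1..n}" and i: "i \<in> {1..n}"
  shows "x ` {1..i} = insert (x i) (x ` {1..i - 1})" and "x i \<notin> x ` {1..i - 1}"
proof -
  have "{1..i} = insert i {1..i - 1}" using i by (cases i) (auto simp: atLeastAtMostSuc_conv)
  then show "x ` {1..i} = insert (x i) (x ` {1..i - 1})" by simp
  have "i \<notin> {1..i - 1}" "{1..i - 1} \<subseteq> {1..n}" using i by auto
  then show "x i \<notin> x ` {1..i - 1}" using inj_on_image_mem_iff[OF inj i] by blast
qed

theorem mainTheorem8:
  fixes X :: "'a set" and f :: "'a set \<Rightarrow> real" and n :: nat
    and Sstar :: "'a set" and x :: "nat \<Rightarrow> 'a"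
  assumes "finite X"
    and "normalized f" and "nonneg_on X f" and "monotone_set_fun X f" and "submodular X f"
    and "supermod_conditioning X f"
    and "0 < n" and "n \<le> card X"
    and "Sstar \<subseteq> X" and "card Sstar \<le> n"
    and "\<forall>S. S \<subseteq> X \<and> card S \<le> n \<longrightarrow> f S \<le> f Sstar"
    and "x ` {1..n} \<subseteq> X" and "inj_on x {1..n}"
  shows "let S = (\<lambda>i. x ` {1..i});
             M = (\<lambda>i. Max ((\<lambda>y. upper_est f y (S (i - 1))) ` (X - S (i - 1))));
             beta = (\<lambda>i. if lower_est f (x i) (S (i - 1)) > 0
                          then lower_est f (x i) (S (i - 1)) / M i else 0)
         in f (S n) \<ge> (1 - exp (- (1 / real n) * (\<Sum>i=1..n. beta i))) * f Sstar"
proof -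
  define S where "S i = x ` {1..i}" for i
  define \<beta> where "\<beta> i = greedy_ratio X f (S (i - 1)) (x i)" for i
  have SX: "S i \<subseteq> X" and opt: "f (S i) \<le> f Sstar" if "i \<le> n" for i
  proof -
    show "S i \<subseteq> X" using assms(12) that unfolding S_def by auto
    have "card (S i) \<le> i" unfolding S_def using card_image_le[of "{1..i}" x] by simp
    then show "f (S i) \<le> f Sstar" using assms(11) \<open>S i \<subseteq> X\<close> that by simp
  qed
  have "f Sstar - f (S i) \<le> exp (- (\<beta> i / n)) * (f Sstar - f (S (i - 1)))" if i: "i \<in> {1..n}" for i
  proof -
    have "i - 1 \<le> n" using i by auto
    then have "S (i - 1) \<subseteq> X" "f (S (i - 1)) \<le> f Sstar" by (fact SX, fact opt)
    moreover have "x i \<in> X - S (i - 1)"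
      using image_prefix_insert(2)[OF assms(13) i] assms(12) i unfolding S_def by auto
    ultimately have "f Sstar - f (insert (x i) (S (i - 1)))
        \<le> exp (- (\<beta> i / n)) * (f Sstar - f (S (i - 1)))"
      unfolding \<beta>_def by (intro gap_insert_le_exp[OF assms(1,2,4,5,6) _ _ assms(9,10,7)])
    then show ?thesis using image_prefix_insert(1)[OF assms(13) i] unfolding S_def by simp
  qed
  moreover have "f Sstar - f (S 0) \<le> f Sstar"
    using assms(2) unfolding normalized_def S_def by simp
  ultimately have "f Sstar - f (S n) \<le> exp (- (\<Sum>i=1..n. \<beta> i / n)) * f Sstar"
    by (rule decay_exp_sum)
  also have "(\<Sum>i=1..n. \<beta> i / n) = 1 / n * (\<Sum>i=1..n. \<beta> i)"
    by (simp add: sum_divide_distrib)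
  finally have "f (S n) \<ge> (1 - exp (- (1 / n) * (\<Sum>i=1..n. \<beta> i))) * f Sstar"
    by (simp add: left_diff_distrib)
  then show ?thesis unfolding Let_def S_def \<beta>_def greedy_ratio_def .
qed

end
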